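(* Let $$F(x)=\sum_{n\ge0}t^n\sum_{(P,Q)\in\mathcal{I}_n}x^{\mathrm{contact}(P)},\qquad G(x,y)\equiv G(t,x,y,w)=\sum_{n\ge0}t^n\sum_{(P,Q)\in\mathcal{I}_n}\sum_{i=0}^{2n}w^{P(i)}x^{\mathrm{contact}_{<i}(P)}y^{\mathrm{contact}_{\ge i}(P)}.$$ Then $$\begin{aligned}G(x,y)={}&F(y)+txw\frac{G(1,y)-G(1,1)}{y-1}F(y)+tx\frac{F(y)-yF(1)}{y-1}F(y)\\&+t\frac{x^2}{y}\,\frac{G(x,y)-\frac{y}{x}F(x)-G(1,y)+yF(1)}{x-1}F(y)+tx\frac{F(x)-F(1)}{x-1}G(x,y).\end{aligned}$$
   Context: A Dyck path of size $n$ is a lattice path from $(0,0)$ to $(2n,0)$ with $n$ up-steps $(1,1)$ and $n$ down-steps $(1,-1)$ never going below height $0$; $P(i)$ is the height of $P$ at abscissa $i$. A contact of a path is a vertex on the $x$-axis (including both endpoints); $\mathrm{contact}(P)$ is their number, and $\mathrm{contact}_{<i}(P)$, $\mathrm{contact}_{\ge i}(P)$ are the numbers of contacts with abscissa $<i$, resp. $\ge i$. The Tamari order on Dyck paths of size $n$ is the reflexive transitive closure of the relation: if $P$ has a down-step $d$ immediately followed by an up-step and $\mathfrak{e}$ is the shortest excursion following $d$ (a subpath staying strictly above its starting height except at its last point), the path obtained by exchanging $d$ and $\mathfrak{e}$ is larger than $P$. $\mathcal{I}_n$ is the set of pairs $(P,Q)$ of Dyck paths of size $n$ with $P\le Q$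 ($P$ is the lower path). Series are formal power series in $t$. *)

theory Defs
  imports Complex_Main "HOL-Computational_Algebra.Formal_Power_Series"
begin

text \<open>Dyck paths are encoded as lists of steps: True = up-step (1,1), False = down-step (1,-1).\<close>

definition step_val :: "bool \<Rightarrow> int" where
  "step_val s = (if s then 1 else -1)"

definition height :: "bool list \<Rightarrow> nat \<Rightarrow> int" where
  "height P i = (\<Sum>s\<leftarrow>take i P. step_val s)"

definition dyck_path :: "nat \<Rightarrow> bool list \<Rightarrow> bool" where
  "dyck_path n P \<longleftrightarrow> length P = 2 * n \<and> count_list P True = n \<and> count_list P False = n
     \<and> (\<forall>i \<le> length P. height P i \<ge> 0)"

definition contact :: "bool list \<Rightarrow> nat" where
  "contact P = card {j. j \<le> length P \<and> height P j = 0}"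

definition contact_lt :: "bool list \<Rightarrow> nat \<Rightarrow> nat" where
  "contact_lt P i = card {j. j < i \<and> j \<le> length P \<and> height P j = 0}"

definition contact_ge :: "bool list \<Rightarrow> nat \<Rightarrow> nat" where
  "contact_ge P i = card {j. i \<le> j \<and> j \<le> length P \<and> height P j = 0}"

text \<open>An excursion: nonempty subpath staying strictly above its starting height except at its
  last point, where it returns to the starting height. (It is then automatically the shortest
  excursion starting at its starting point, being unique.)\<close>
definition excursion :: "bool list \<Rightarrow> bool" where
  "excursion e \<longleftrightarrow> e \<noteq> [] \<and> height e (length e) = 0 \<and>
     (\<forall>i. 0 < i \<and> i < length e \<longrightarrow> height e i > 0)"

definition tamari_step :: "bool list \<Rightarrow> bool list \<Rightarrow> bool" where
  "tamari_step P Q \<longleftrightarrow> (\<exists>A e B. P = A @ False # e @ B \<and> excursion e \<and> Q = A @ e @ False # B)"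

definition tamari_le :: "nat \<Rightarrow> bool list \<Rightarrow> bool list \<Rightarrow> bool" where
  "tamari_le n P Q \<longleftrightarrow> dyck_path n P \<and> dyck_path n Q \<and> tamari_step\<^sup>*\<^sup>* P Q"

definition intervals :: "nat \<Rightarrow> (bool list \<times> bool list) set" where
  "intervals n = {(P, Q). tamari_le n P Q}"

text \<open>Generating functions, with the catalytic variables specialised to real numbers.\<close>
definition F_gf :: "real \<Rightarrow> real fps" where
  "F_gf x = Abs_fps (\<lambda>n. \<Sum>(P, Q)\<in>intervals n. x ^ contact P)"

definition G_gf :: "real \<Rightarrow> real \<Rightarrow> real \<Rightarrow> real fps" where
  "G_gf w x y = Abs_fps (\<lambda>n. \<Sum>(P, Q)\<in>intervals n. \<Sum>i = 0..2*n.
      w ^ nat (height P i) * x ^ contact_lt P i * y ^ contact_ge P i)"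

end

theory Submission
  imports Defs
begin

(*
  Every interval [P, Q] of size n + 1 decomposes uniquely along the first return of Q:
  Q = U Q1 D Q2 and P = U P1' D P1'' P2, where [P1, Q1] and [P2, Q2] are intervals and
  P1 = P1' P1'' is cut at one of its contacts s (the lower path is graft P1 P2 s).
  The Tamari order is what makes this work: a chain of moves from P to Q never crosses a
  contact of Q, and a down-step may always be moved to the right past a balanced word.
  So the n-th coefficient of a series over intervals becomes a sum over pairs of smaller
  intervals and a contact s of the first lower path.

  In graft P1 P2 s the vertices of P1' are lifted by one (an extra factor w), those of P1''
  keep their height, and those of P2 are shifted to the right. Summing over s, the number of
  contacts of P1 before or after a given vertex ranges over an interval of integers, so the
  x- and y-weights add up to geometric sums; these are the divided differences
  (G(1,y) - G(1,1))/(y - 1), (F(y) - y F(1))/(y - 1), (F(x) - F(1))/(x - 1) and the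
  x^2/y term of the functional equation.
*)

lemma append_Cons_eq_append_longer:
  assumes "Z @ x # W = Z' @ W'" and "length Z < length Z'"
  shows "Z' = Z @ x # drop (Suc (length Z)) Z'"
proof -
  have "take (Suc (length Z)) Z' = Z @ [x]"
    using arg_cong[OF assms(1), of "take (Suc (length Z))"] assms(2) by simp
  then show ?thesis by (metis append_take_drop_id append.assoc append_Cons append_Nil)
qed

lemma step_val_simps [simp]: "step_val True = 1" "step_val False = -1"
  by (simp_all add: step_val_def)

lemma height_0 [simp]: "height P 0 = 0"
  by (simp add: height_def)

lemma height_Cons_Suc [simp]: "height (a # P) (Suc i) = step_val a + height P i"
  by (simp add: height_def)

lemma height_append:
  "height (A @ B) i = (if i \<le> length A then height A i else height A (length A) + height B (i - length A))"
  by (simp add: height_def)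

lemma height_append_length:
  "height A (length A) = 0 \<Longrightarrow> height (A @ B) (length A + i) = height B i"
  by (simp add: height_append)

lemma height_ge_length: "length P \<le> i \<Longrightarrow> height P i = height P (length P)"
  by (simp add: height_def)

lemma height_take: "i \<le> r \<Longrightarrow> height (take r P) i = height P i"
  by (simp add: height_def min_def)

lemma height_Suc_ge: "height P i - 1 \<le> height P (Suc i)"
  unfolding height_def by (cases "i < length P") (auto simp: take_Suc_conv_app_nth step_val_def)

lemma height_length: "height P (length P) = int (count_list P True) - int (count_list P False)"
  by (induction P) (auto simp: step_val_def)

lemma length_eq_count_list: "length P = count_list P True + count_list P False"
  by (induction P) auto

definition balanced :: "bool list \<Rightarrow> bool" where
  "balanced P \<longleftrightarrow> (\<forall>i. 0 \<le> height P i) \<and> height P (length P) = 0"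

lemma balanced_height_nonneg: "balanced P \<Longrightarrow> 0 \<le> height P i"
  by (simp add: balanced_def)

lemma balanced_height_length: "balanced P \<Longrightarrow> height P (length P) = 0"
  by (simp add: balanced_def)

lemma balancedI:
  assumes "\<And>i. i \<le> length P \<Longrightarrow> 0 \<le> height P i" and "height P (length P) = 0"
  shows "balanced P"
  unfolding balanced_def
  using assms height_ge_length[of P] by (metis nle_le)

lemma dyck_path_iff_balanced: "dyck_path n P \<longleftrightarrow> balanced P \<and> length P = 2 * n"
proof -
  have "height P (length P) = 0 \<and> length P = 2 * n \<longleftrightarrow>
      length P = 2 * n \<and> count_list P True = n \<and> count_list P False = n"
    using height_length[of P] length_eq_count_list[of P] by linarith
  then show ?thesis
    unfolding dyck_path_def using balancedI[of P] balanced_def by blast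
qed

lemma length_balanced: "balanced P \<Longrightarrow> length P = 2 * count_list P True"
  using height_length[of P] length_eq_count_list[of P] balanced_height_length[of P] by linarith

lemma balanced_append: "balanced A \<Longrightarrow> balanced B \<Longrightarrow> balanced (A @ B)"
  unfolding balanced_def by (simp add: height_append)

lemma balanced_appendD:
  assumes "balanced (A @ B)" and "height A (length A) = 0"
  shows "balanced A" and "balanced B"
proof -
  show "balanced A"
  proof (rule balancedI)
    fix i assume "i \<le> length A"
    then show "0 \<le> height A i"
      using balanced_height_nonneg[OF assms(1), of i] by (simp add: height_append)
  qed (rule assms(2))
  show "balanced B"
    using assms balanced_height_nonneg[of "A @ B" "length A + _"] balanced_height_length[of "A @ B"]
    by (intro balancedI) (simp_all add: height_append_length)
qed

lemma balanced_take_drop: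
  assumes "balanced P" "s \<le> length P" "height P s = 0"
  shows "balanced (take s P)" and "balanced (drop s P)"
  using balanced_appendD[of "take s P" "drop s P"] assms by (simp_all add: height_take)

lemma balanced_up_down: "balanced X \<Longrightarrow> balanced Y \<Longrightarrow> balanced (True # X @ False # Y)"
proof -
  assume X: "balanced X" and Y: "balanced Y"
  have "balanced (True # X @ [False])"
  proof (rule balancedI)
    fix i assume i: "i \<le> length (True # X @ [False])"
    show "0 \<le> height (True # X @ [False]) i"
    proof (cases i)
      case (Suc j)
      then show ?thesis
        using X i balanced_height_nonneg[OF X, of j] balanced_height_length[OF X]
        by (auto simp: height_append le_Suc_eq)
    qed simp
  qed (use X balanced_height_length in \<open>simp add: height_append\<close>)
  from balanced_append[OF this Y] show ?thesis by simp
qed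

lemma height_up_down: "p \<le> length X \<Longrightarrow> height (True # X @ False # Y) (Suc p) = 1 + height X p"
  by (simp add: height_append)

lemma height_up_down_after:
  "balanced X \<Longrightarrow> height (True # X @ False # Y) (Suc (Suc (length X)) + d) = height Y d"
  by (simp add: height_append balanced_height_length)

lemma up_down_balanced_inj:
  assumes eq: "True # Z @ False # W = True # Z' @ False # W'" and "balanced Z" "balanced Z'"
  shows "Z = Z'" and "W = W'"
proof -
  have no_shorter: False
    if "Z @ False # W = Z' @ False # W'" "balanced Z" "balanced Z'" "length Z < length Z'"
    for Z W Z' W'
  proof -
    from that(1,4) have Z': "Z' = Z @ False # drop (Suc (length Z)) Z'"
      by (rule append_Cons_eq_append_longer)
    have "height Z' (Suc (length Z)) = -1"
      using balanced_height_length[OF that(2)] by (subst Z') (simp add: height_append)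
    then show False using balanced_height_nonneg[OF that(3)] by (metis neg_0_le_iff_le not_one_le_zero)
  qed
  from eq have "Z @ False # W = Z' @ False # W'" by simp
  moreover from this have "length Z = length Z'"
    using no_shorter assms(2,3) by (metis linorder_neqE_nat)
  ultimately show "Z = Z'" "W = W'" by auto
qed

lemma excursion_height_nonneg: "excursion e \<Longrightarrow> 0 \<le> height e i"
  unfolding excursion_def
  by (cases "0 < i \<and> i < length e") (auto intro: less_imp_le simp: height_ge_length[of e i])

lemma excursion_balanced: "excursion e \<Longrightarrow> balanced e"
  using excursion_height_nonneg by (auto simp: balanced_def excursion_def)

lemma excursion_shape:
  assumes ex: "excursion e"
  obtains X where "e = True # X @ [False]" and "balanced X"
proof -
  obtain a e' where e: "e = a # e'"
    using ex unfolding excursion_def by (cases e) auto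
  have "e' \<noteq> []"
  proof
    assume "e' = []"
    then have "height e (length e) = step_val a" using e by simp
    then show False using ex unfolding excursion_def step_val_def by (auto split: if_splits)
  qed
  then obtain X b where e': "e' = X @ [b]" by (metis rev_exhaust)
  have hX: "height e (Suc i) = step_val a + height X i" if "i \<le> length X" for i
    using that e e' by (simp add: height_append)
  have pos: "0 < height e (Suc i)" if "i \<le> length X" for i
  proof -
    have "Suc i < length e" using that e e' by simp
    then show ?thesis using ex unfolding excursion_def by blast
  qed
  have a: "a = True"
    using pos[of 0] hX[of 0] by (cases a) auto
  have "height e (length e) = 1 + height X (length X) + step_val b"
    using e e' a by (simp add: height_append)
  moreover have "0 < 1 + height X (length X)"
    using pos[of "length X"] hX[of "length X"] a by simp
  ultimately have b: "b = False" and X0: "height X (length X) = 0"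
    using ex unfolding excursion_def by (cases b; auto)+
  have "balanced X"
    by (rule balancedI) (use pos hX a X0 in force)+
  with e e' a b show thesis by (intro that) auto
qed

lemma balanced_first_excursion:
  assumes "balanced Y" "Y \<noteq> []"
  obtains r where "0 < r" "r \<le> length Y" "excursion (take r Y)" "balanced (drop r Y)"
proof -
  define r where "r = (LEAST r. 0 < r \<and> height Y r = 0)"
  have ex: "0 < length Y \<and> height Y (length Y) = 0"
    using assms balanced_height_length by auto
  have r: "0 < r \<and> height Y r = 0" unfolding r_def by (rule LeastI_ex) (use ex in blast)
  have r_le: "r \<le> length Y" unfolding r_def by (rule Least_le) (use ex in blast)
  have pos: "0 < height Y i" if "0 < i" "i < r" for i
    using not_less_Least[of i "\<lambda>r. 0 < r \<and> height Y r = 0"] that balanced_height_nonneg[OF assms(1), of i]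
    unfolding r_def by auto
  have "excursion (take r Y)"
    unfolding excursion_def using r r_le pos assms(2) height_take[of _ r Y] by auto
  moreover have "balanced (drop r Y)"
    using balanced_take_drop(2)[OF assms(1) r_le] r by simp
  ultimately show thesis using r r_le that by blast
qed

lemma balanced_first_return:
  assumes "balanced P" "P \<noteq> []"
  obtains X Y where "P = True # X @ False # Y" "balanced X" "balanced Y"
proof -
  obtain r where r: "excursion (take r P)" "balanced (drop r P)"
    using balanced_first_excursion[OF assms] by blast
  obtain X where X: "take r P = True # X @ [False]" "balanced X"
    using excursion_shape[OF r(1)] by blast
  have "P = True # X @ False # drop r P"
    using X(1) by (metis append_take_drop_id append.assoc append_Cons append_Nil)
  with X r that show thesis by blast
qed

lemma tamari_step_length: "tamari_step P Q \<Longrightarrow> length Q = length P"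
  unfolding tamari_step_def by auto

lemma tamari_steps_length: "tamari_step\<^sup>*\<^sup>* P Q \<Longrightarrow> length Q = length P"
  by (induction rule: rtranclp_induct) (auto dest: tamari_step_length)

lemma tamari_move_height:
  assumes "excursion e"
  shows "height (A @ False # e @ B) i \<le> height (A @ e @ False # B) i"
    and "i \<le> length A \<or> length A + length e + 1 \<le> i \<Longrightarrow>
         height (A @ False # e @ B) i = height (A @ e @ False # B) i"
proof -
  have e0: "height e (length e) = 0"
    using assms unfolding excursion_def by auto
  have key: "height (False # e @ B) k \<le> height (e @ False # B) k
     \<and> (length e + 1 \<le> k \<longrightarrow> height (False # e @ B) k = height (e @ False # B) k)" for k
  proof (cases k)
    case (Suc k')
    show ?thesis
    proof (cases "k' < length e")
      case True
      with Suc height_Suc_ge[of e k'] show ?thesis by (auto simp: height_append)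
    next
      case False
      then obtain m where "k' = length e + m" by (metis le_add_diff_inverse not_less)
      with Suc e0 show ?thesis by (cases m) (auto simp: height_append)
    qed
  qed simp
  show "height (A @ False # e @ B) i \<le> height (A @ e @ False # B) i"
    and "i \<le> length A \<or> length A + length e + 1 \<le> i \<Longrightarrow>
         height (A @ False # e @ B) i = height (A @ e @ False # B) i"
    using key[of "i - length A"] by (auto simp: height_append)
qed

lemma tamari_steps_height_le: "tamari_step\<^sup>*\<^sup>* P Q \<Longrightarrow> height P i \<le> height Q i"
proof (induction rule: rtranclp_induct)
  case (step Q R)
  then show ?case
    unfolding tamari_step_def using tamari_move_height(1) by (blast intro: order_trans)
qed simp

lemma tamari_steps_balanced: "tamari_step\<^sup>*\<^sup>* P Q \<Longrightarrow> balanced P \<Longrightarrow> balanced Q"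
proof (induction rule: rtranclp_induct)
  case (step Q R)
  then obtain A e B where Q: "Q = A @ False # e @ B" and e: "excursion e" and R: "R = A @ e @ False # B"
    unfolding tamari_step_def by blast
  have "height R (length R) = height Q (length Q)"
    using tamari_move_height(2)[OF e, of "length R" A B] Q R by simp
  moreover have "0 \<le> height R i" for i
    using step balanced_height_nonneg tamari_move_height(1)[OF e, of A B i] Q R by (metis order_trans)
  ultimately show ?case
    using step balanced_height_length unfolding balanced_def by simp
qed

lemma tamari_step_append_cong: "tamari_step S S' \<Longrightarrow> tamari_step (A @ S @ B) (A @ S' @ B)"
  unfolding tamari_step_def by (metis append.assoc append_Cons)

lemma tamari_steps_append_cong:
  "tamari_step\<^sup>*\<^sup>* S S' \<Longrightarrow> tamari_step\<^sup>*\<^sup>* (A @ S @ B) (A @ S' @ B)"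
  by (induction rule: rtranclp_induct) (auto intro: rtranclp.rtrancl_into_rtrancl tamari_step_append_cong)

lemma tamari_move_no_contact_inside:
  assumes e: "excursion e" and Q: "balanced (A @ e @ False # B)"
    and k: "length A < k" "k \<le> length A + length e"
  shows "height (A @ e @ False # B) k \<noteq> 0"
proof -
  let ?Q = "A @ e @ False # B" and ?h = "height A (length A)"
  have hk: "height ?Q k = ?h + height e (k - length A)"
    using k by (simp add: height_append)
  have "0 \<le> ?h"
    using balanced_height_nonneg[OF Q, of "length A"] by (simp add: height_append)
  show ?thesis
  proof (cases "k < length A + length e")
    case True
    then have "0 < height e (k - length A)" using e k unfolding excursion_def by auto
    with hk \<open>0 \<le> ?h\<close> show ?thesis by simp
  next
    case False
    then have "k = length A + length e" using k by simp
    moreover have "0 \<le> height ?Q (Suc (length A + length e))"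
      by (rule balanced_height_nonneg[OF Q])
    ultimately show ?thesis
      using hk e unfolding excursion_def by (simp add: height_append)
  qed
qed

lemma tamari_steps_split_at_contact:
  "tamari_step\<^sup>*\<^sup>* P Q \<Longrightarrow> balanced P \<Longrightarrow> k \<le> length Q \<Longrightarrow> height Q k = 0 \<Longrightarrow>
   \<exists>P1 P2. P = P1 @ P2 \<and> length P1 = k \<and> tamari_step\<^sup>*\<^sup>* P1 (take k Q) \<and> tamari_step\<^sup>*\<^sup>* P2 (drop k Q)"
proof (induction Q arbitrary: k rule: rtranclp_induct)
  case base
  then show ?case by (intro exI[where x="take k P"] exI[where x="drop k P"]) auto
next
  case (step Q0 Q)
  then obtain A e B where Q0: "Q0 = A @ False # e @ B" and e: "excursion e"
    and Q: "Q = A @ e @ False # B"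
    unfolding tamari_step_def by blast
  have "balanced Q"
    using tamari_steps_balanced[OF rtranclp.rtrancl_into_rtrancl[OF step.hyps]] step.prems by simp
  then have outside: "k \<le> length A \<or> length A + length e + 1 \<le> k"
    using tamari_move_no_contact_inside[OF e, of A B k] step.prems Q by fastforce
  then have "height Q0 k = 0"
    using tamari_move_height(2)[OF e, of k A B] Q0 Q step.prems by simp
  with step.IH[of k] step.prems Q0 Q obtain P1 P2 where
    P: "P = P1 @ P2" "length P1 = k" and
    steps: "tamari_step\<^sup>*\<^sup>* P1 (take k Q0)" "tamari_step\<^sup>*\<^sup>* P2 (drop k Q0)"
    by auto
  from outside show ?case
  proof
    assume "k \<le> length A"
    then have "take k Q0 = take k Q" and "tamari_step (drop k Q0) (drop k Q)"
      using Q0 Q e unfolding tamari_step_def by auto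
    with P steps show ?thesis by (metis rtranclp.rtrancl_into_rtrancl)
  next
    assume "length A + length e + 1 \<le> k"
    then obtain m where m: "k = length A + length e + 1 + m" by (metis le_Suc_ex)
    then have "drop k Q0 = drop k Q" and "tamari_step (take k Q0) (take k Q)"
      using Q0 Q e unfolding tamari_step_def by auto
    with P steps show ?thesis by (metis rtranclp.rtrancl_into_rtrancl)
  qed
qed

lemma excursion_inside_balanced:
  assumes Z0: "balanced (A @ False # Z)" and eq: "Z @ False # W = e @ B" and e: "excursion e"
  obtains Z' where "Z = e @ Z'" and "B = Z' @ False # W"
proof -
  have "1 \<le> height A (length A)"
    using balanced_height_nonneg[OF Z0, of "Suc (length A)"] by (simp add: height_append)
  then have hZ: "height Z (length Z) \<le> 0"
    using balanced_height_length[OF Z0] by (simp add: height_append)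
  have "length e \<le> length Z"
  proof (rule ccontr)
    assume "\<not> length e \<le> length Z"
    then have "e = Z @ False # drop (Suc (length Z)) e"
      by (intro append_Cons_eq_append_longer[OF eq]) simp
    then obtain e2 where "e = Z @ False # e2" by blast
    then have "height e (Suc (length Z)) = height Z (length Z) - 1"
      by (simp add: height_append)
    with hZ excursion_height_nonneg[OF e, of "Suc (length Z)"] show False by simp
  qed
  with eq[symmetric] have "e = take (length e) Z" and "B = drop (length e) Z @ False # W"
    unfolding append_eq_append_conv_if by auto
  then show thesis by (metis that append_take_drop_id)
qed

lemma tamari_move_inside_balanced:
  assumes eq: "A @ False # e @ B = Z @ False # W" and "length A < length Z"
    and Z: "balanced Z" and e: "excursion e"
  obtains Z' where "tamari_step Z Z'" and "A @ e @ False # B = Z' @ False # W"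
proof -
  define Z2 where "Z2 = drop (Suc (length A)) Z"
  have Z_eq: "Z = A @ False # Z2"
    unfolding Z2_def by (rule append_Cons_eq_append_longer[OF eq assms(2)])
  have "Z2 @ False # W = e @ B" using eq unfolding Z_eq by simp
  then obtain Z3 where "Z2 = e @ Z3" and "B = Z3 @ False # W"
    using excursion_inside_balanced[OF _ _ e] Z unfolding Z_eq by blast
  with e show thesis by (intro that[of "A @ e @ False # Z3"]) (auto simp: tamari_step_def Z_eq)
qed

lemma tamari_steps_first_return:
  "tamari_step\<^sup>*\<^sup>* R R' \<Longrightarrow> R = True # Z @ False # W \<Longrightarrow> balanced Z \<Longrightarrow>
   \<exists>Z' W'. R' = True # Z' @ False # W' \<and> balanced Z' \<and> tamari_step\<^sup>*\<^sup>* (Z @ W) (Z' @ W')"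
proof (induction R' rule: rtranclp_induct)
  case (step R0 R')
  then obtain Z0 W0 where R0: "R0 = True # Z0 @ False # W0" and Z0: "balanced Z0"
    and steps: "tamari_step\<^sup>*\<^sup>* (Z @ W) (Z0 @ W0)"
    by blast
  from step.hyps(2) obtain A e B where R0': "R0 = A @ False # e @ B" and e: "excursion e"
    and R': "R' = A @ e @ False # B"
    unfolding tamari_step_def by blast
  obtain A' where A: "A = True # A'" using R0 R0' by (cases A) auto
  have eq: "Z0 @ False # W0 = A' @ False # e @ B" using R0 R0' A by simp
  consider (inside) "length A' < length Z0" | (at_return) "length A' = length Z0"
    | (after) "length Z0 < length A'" by linarith
  then show ?case
  proof cases
    case inside
    then obtain Z' where move: "tamari_step Z0 Z'" and R'_eq: "A' @ e @ False # B = Z' @ False # W0"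
      using tamari_move_inside_balanced[OF eq[symmetric] _ Z0 e] by blast
    have "balanced Z'" by (rule tamari_steps_balanced[OF r_into_rtranclp[of tamari_step, OF move] Z0])
    moreover have "R' = True # Z' @ False # W0" using R' A R'_eq by simp
    moreover have "tamari_step (Z0 @ W0) (Z' @ W0)"
      using tamari_step_append_cong[OF move, of "[]" W0] by simp
    ultimately show ?thesis using steps by (blast intro: rtranclp.rtrancl_into_rtrancl)
  next
    case at_return
    then have "A' = Z0" and W0: "W0 = e @ B" using eq by auto
    moreover have "balanced (Z0 @ e)" using balanced_append[OF Z0 excursion_balanced[OF e]] .
    ultimately show ?thesis using R' A steps by (intro exI[of _ "Z0 @ e"] exI[of _ B]) simp
  next
    case after
    define A2 where "A2 = drop (Suc (length Z0)) A'"
    have A'_eq: "A' = Z0 @ False # A2"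
      unfolding A2_def by (rule append_Cons_eq_append_longer[OF eq]) (use after in simp)
    have W0: "W0 = A2 @ False # e @ B" using eq unfolding A'_eq by simp
    have move: "tamari_step W0 (A2 @ e @ False # B)"
      unfolding tamari_step_def W0 using e by blast
    have "R' = True # Z0 @ False # (A2 @ e @ False # B)" using R' A A'_eq by simp
    moreover have "tamari_step (Z0 @ W0) (Z0 @ A2 @ e @ False # B)"
      using tamari_step_append_cong[OF move, of Z0 "[]"] by simp
    ultimately show ?thesis using Z0 steps by (blast intro: rtranclp.rtrancl_into_rtrancl)
  qed
qed blast

lemma tamari_steps_down_past_balanced:
  "balanced Y \<Longrightarrow> tamari_step\<^sup>*\<^sup>* (A @ False # Y @ B) (A @ Y @ False # B)"
proof (induction "length Y" arbitrary: Y A rule: less_induct)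
  case less
  show ?case
  proof (cases "Y = []")
    case False
    then obtain r where r: "0 < r" "excursion (take r Y)" "balanced (drop r Y)"
      using balanced_first_excursion[OF less.prems] by blast
    define e Y2 where "e = take r Y" and "Y2 = drop r Y"
    have move: "tamari_step (A @ False # e @ (Y2 @ B)) ((A @ e) @ False # Y2 @ B)"
      unfolding tamari_step_def using r(2) e_def by auto
    have "length Y2 < length Y" unfolding Y2_def using r(1) False by simp
    then have "tamari_step\<^sup>*\<^sup>* ((A @ e) @ False # Y2 @ B) ((A @ e) @ Y2 @ False # B)"
      using less.hyps r(3) Y2_def by blast
    moreover have "Y = e @ Y2" unfolding e_def Y2_def by simp
    ultimately show ?thesis using move by (simp add: converse_rtranclp_into_rtranclp)
  qed simp
qed

definition contacts :: "bool list \<Rightarrow> nat set" where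
  "contacts P = {j. j \<le> length P \<and> height P j = 0}"

definition graft :: "bool list \<Rightarrow> bool list \<Rightarrow> nat \<Rightarrow> bool list" where
  "graft P1 P2 s = True # take s P1 @ False # drop s P1 @ P2"

lemma finite_contacts [simp]: "finite (contacts P)"
  unfolding contacts_def by (rule finite_subset[of _ "{..length P}"]) auto

lemma contacts_le_length: "j \<in> contacts P \<Longrightarrow> j \<le> length P"
  by (simp add: contacts_def)

lemma balanced_take_drop_contact:
  assumes "balanced P" "s \<in> contacts P"
  shows "balanced (take s P)" and "balanced (drop s P)"
  using balanced_take_drop[OF assms(1)] assms(2) unfolding contacts_def by auto

lemma up_down_contact_ge:
  assumes X: "balanced X" and "0 < j" and "height (True # X @ False # Y) j = 0"
  shows "Suc (Suc (length X)) \<le> j"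
proof (rule ccontr)
  assume "\<not> ?thesis"
  then have "height (True # X @ False # Y) j = 1 + height X (j - 1)"
    using height_up_down[of "j - 1" X Y] \<open>0 < j\<close> by simp
  with assms balanced_height_nonneg[OF X, of "j - 1"] show False by simp
qed

lemma tamari_steps_up_down:
  assumes steps: "tamari_step\<^sup>*\<^sup>* P Q" and P: "balanced P"
    and Q: "Q = True # Q1 @ False # Q2" and Q1: "balanced Q1"
  obtains P1 P2 s where "P = graft P1 P2 s" "s \<in> contacts P1" "balanced P1" "balanced P2"
    "tamari_step\<^sup>*\<^sup>* P1 Q1" "tamari_step\<^sup>*\<^sup>* P2 Q2"
proof -
  have len: "length P = length Q" using tamari_steps_length[OF steps] by simp
  then have "P \<noteq> []" using Q by auto
  then obtain X Y where P_eq: "P = True # X @ False # Y" and X: "balanced X" and Y: "balanced Y"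
    using balanced_first_return[OF P] by blast
  define K where "K = Suc (Suc (length Q1))"
  have QK: "height Q K = 0" using height_up_down_after[OF Q1, of Q2 0] Q K_def by simp
  obtain R1 P2 where split: "P = R1 @ P2" "length R1 = K"
    "tamari_step\<^sup>*\<^sup>* R1 (take K Q)" "tamari_step\<^sup>*\<^sup>* P2 (drop K Q)"
    using tamari_steps_split_at_contact[OF steps P _ QK] Q K_def by auto
  have PK: "height P K = 0"
    using tamari_steps_height_le[OF steps, of K] QK balanced_height_nonneg[OF P, of K] by simp
  then have "Suc (Suc (length X)) \<le> K" using up_down_contact_ge[OF X, of K Y] P_eq K_def by simp
  then obtain d where Kd: "K = Suc (Suc (length X)) + d" by (metis le_add_diff_inverse)
  have d: "d \<le> length Y" using len P_eq Q Kd K_def by simp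
  define Y1 where "Y1 = take d Y"
  have "R1 = take K P" and "P2 = drop K P" using split(1,2) by simp_all
  then have R1: "R1 = True # X @ False # Y1" and P2: "P2 = drop d Y"
    unfolding P_eq Kd Y1_def by simp_all
  have "height Y d = 0" using PK height_up_down_after[OF X, of Y d] P_eq Kd by simp
  then have Y1: "balanced Y1" and "balanced P2"
    using balanced_take_drop[OF Y d] Y1_def P2 by auto
  obtain Z' W' where Z': "take K Q = True # Z' @ False # W'" "balanced Z'"
    and steps1: "tamari_step\<^sup>*\<^sup>* (X @ Y1) (Z' @ W')"
    using tamari_steps_first_return[OF split(3) R1 X] by blast
  have "True # Q1 @ False # [] = True # Z' @ False # W'" using Q K_def Z'(1) by simp
  from up_down_balanced_inj[OF this Q1 Z'(2)] steps1 have "tamari_step\<^sup>*\<^sup>* (X @ Y1) Q1" by simp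
  moreover have "length X \<in> contacts (X @ Y1)"
    using balanced_height_length[OF X] by (simp add: contacts_def height_append)
  moreover have "P = graft (X @ Y1) P2 (length X)" using P_eq Y1_def P2 by (simp add: graft_def)
  moreover have "drop K Q = Q2" using Q K_def by simp
  ultimately show thesis using that balanced_append[OF X Y1] \<open>balanced P2\<close> split(4) by blast
qed

lemma graft_tamari_le:
  assumes I1: "tamari_le k P1 Q1" and I2: "tamari_le m P2 Q2" and s: "s \<in> contacts P1"
  shows "tamari_le (Suc (k + m)) (graft P1 P2 s) (True # Q1 @ False # Q2)"
proof -
  have P1: "balanced P1" "length P1 = 2 * k" and Q1: "balanced Q1" "length Q1 = 2 * k"
    and P2: "balanced P2" "length P2 = 2 * m" and Q2: "balanced Q2" "length Q2 = 2 * m"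
    and steps1: "tamari_step\<^sup>*\<^sup>* P1 Q1" and steps2: "tamari_step\<^sup>*\<^sup>* P2 Q2"
    using I1 I2 unfolding tamari_le_def dyck_path_iff_balanced by auto
  define X Y where "X = take s P1" and "Y = drop s P1"
  have X: "balanced X" and Y: "balanced Y"
    using balanced_take_drop_contact[OF P1(1) s] X_def Y_def by auto
  have P1_eq: "P1 = X @ Y" by (simp add: X_def Y_def)
  have "dyck_path (Suc (k + m)) (graft P1 P2 s)"
    unfolding dyck_path_iff_balanced graft_def
    using balanced_up_down[OF X balanced_append[OF Y P2(1)]] P1 P2 X_def Y_def by simp
  moreover have "dyck_path (Suc (k + m)) (True # Q1 @ False # Q2)"
    unfolding dyck_path_iff_balanced using balanced_up_down[OF Q1(1) Q2(1)] Q1 Q2 by simp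
  moreover have "tamari_step\<^sup>*\<^sup>* (graft P1 P2 s) (True # Q1 @ False # Q2)"
  proof -
    have "tamari_step\<^sup>*\<^sup>* (graft P1 P2 s) (True # P1 @ False # P2)"
      using tamari_steps_down_past_balanced[OF Y, of "True # X" P2]
      unfolding graft_def X_def[symmetric] Y_def[symmetric] by (subst P1_eq) simp
    also have "tamari_step\<^sup>*\<^sup>* \<dots> (True # Q1 @ False # P2)"
      using tamari_steps_append_cong[OF steps1, of "[True]" "False # P2"] by simp
    also have "tamari_step\<^sup>*\<^sup>* \<dots> (True # Q1 @ False # Q2)"
      using tamari_steps_append_cong[OF steps2, of "True # Q1 @ [False]" "[]"] by simp
    finally show ?thesis .
  qed
  ultimately show ?thesis unfolding tamari_le_def by blast
qed

lemma tamari_le_Suc_decompose: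
  assumes "tamari_le (Suc n) P Q"
  obtains k P1 Q1 P2 Q2 s where "k \<le> n" "tamari_le k P1 Q1" "tamari_le (n - k) P2 Q2"
    "s \<in> contacts P1" "P = graft P1 P2 s" "Q = True # Q1 @ False # Q2"
proof -
  have P: "balanced P" and Q: "balanced Q" "length Q = 2 * Suc n"
    and steps: "tamari_step\<^sup>*\<^sup>* P Q"
    using assms unfolding tamari_le_def dyck_path_iff_balanced by auto
  have "Q \<noteq> []" using Q(2) by auto
  then obtain Q1 Q2 where Q_eq: "Q = True # Q1 @ False # Q2" and Q1: "balanced Q1" and Q2: "balanced Q2"
    using balanced_first_return[OF Q(1)] by blast
  obtain P1 P2 s where P_eq: "P = graft P1 P2 s" and s: "s \<in> contacts P1"
    and P12: "balanced P1" "balanced P2"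
    and steps1: "tamari_step\<^sup>*\<^sup>* P1 Q1" and steps2: "tamari_step\<^sup>*\<^sup>* P2 Q2"
    using tamari_steps_up_down[OF steps P Q_eq Q1] by blast
  define k where "k = count_list Q1 True"
  have "length Q1 = 2 * k" using length_balanced[OF Q1] k_def by simp
  moreover have "length Q2 = 2 * (n - k)" "k \<le> n" using Q(2) Q_eq calculation by simp_all
  ultimately have "tamari_le k P1 Q1" "tamari_le (n - k) P2 Q2"
    unfolding tamari_le_def dyck_path_iff_balanced
    using P12 Q1 Q2 steps1 steps2 tamari_steps_length[OF steps1] tamari_steps_length[OF steps2] by auto
  with \<open>k \<le> n\<close> s P_eq Q_eq that show thesis by blast
qed

lemma graft_inj:
  assumes eq: "graft P1 P2 s = graft P1' P2' s'" and len: "length P1 = length P1'"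
    and P1: "balanced P1" "s \<in> contacts P1" and P1': "balanced P1'" "s' \<in> contacts P1'"
  shows "P1 = P1'" and "P2 = P2'" and "s = s'"
proof -
  have "take s P1 = take s' P1'" and rest: "drop s P1 @ P2 = drop s' P1' @ P2'"
    using up_down_balanced_inj[OF eq[unfolded graft_def] balanced_take_drop_contact(1)[OF P1]
        balanced_take_drop_contact(1)[OF P1']] by simp_all
  moreover have "length (take s P1) = s" "length (take s' P1') = s'"
    using P1(2) P1'(2) contacts_le_length by (simp_all add: min_absorb2)
  ultimately show "s = s'" by simp
  with len rest have "drop s P1 = drop s' P1'" and "P2 = P2'" by simp_all
  with \<open>take s P1 = take s' P1'\<close> show "P1 = P1'" by (metis append_take_drop_id)
  show "P2 = P2'" by fact
qed

lemma finite_intervals [simp]: "finite (intervals n)"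
proof -
  have "intervals n \<subseteq> {P. length P = 2 * n} \<times> {Q. length Q = 2 * n}"
    unfolding intervals_def tamari_le_def dyck_path_def by auto
  then show ?thesis
    using finite_lists_length_eq[of "UNIV :: bool set" "2 * n"] by (auto intro: finite_subset)
qed

lemma intervals_fst: "I \<in> intervals n \<Longrightarrow> balanced (fst I) \<and> length (fst I) = 2 * n"
  unfolding intervals_def tamari_le_def dyck_path_iff_balanced by auto

definition graft_data :: "nat \<Rightarrow> ((nat \<times> (bool list \<times> bool list) \<times> (bool list \<times> bool list)) \<times> nat) set" where
  "graft_data n = {((k, I1, I2), s). k \<le> n \<and> I1 \<in> intervals k \<and> I2 \<in> intervals (n - k) \<and> s \<in> contacts (fst I1)}"

definition graft_interval ::
  "(nat \<times> (bool list \<times> bool list) \<times> (bool list \<times> bool list)) \<times> nat \<Rightarrow> bool list \<times> bool list" where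
  "graft_interval = (\<lambda>((k, (P1, Q1), (P2, Q2)), s). (graft P1 P2 s, True # Q1 @ False # Q2))"

lemma mem_graft_data:
  "((k, (P1, Q1), (P2, Q2)), s) \<in> graft_data n \<longleftrightarrow>
   k \<le> n \<and> tamari_le k P1 Q1 \<and> tamari_le (n - k) P2 Q2 \<and> s \<in> contacts P1"
  unfolding graft_data_def intervals_def by simp

lemma inj_on_graft_interval: "inj_on graft_interval (graft_data n)"
proof (rule inj_onI)
  fix d d' assume "d \<in> graft_data n" "d' \<in> graft_data n" and eq: "graft_interval d = graft_interval d'"
  moreover obtain k P1 Q1 P2 Q2 s where d: "d = ((k, (P1, Q1), (P2, Q2)), s)" by (metis prod.exhaust)
  moreover obtain k' P1' Q1' P2' Q2' s' where d': "d' = ((k', (P1', Q1'), (P2', Q2')), s')"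
    by (metis prod.exhaust)
  ultimately have I: "tamari_le k P1 Q1" "s \<in> contacts P1" and I': "tamari_le k' P1' Q1'" "s' \<in> contacts P1'"
    by (auto simp: mem_graft_data)
  then have P1: "balanced P1" "length P1 = 2 * k" "balanced Q1" "length Q1 = 2 * k"
    and P1': "balanced P1'" "length P1' = 2 * k'" "balanced Q1'" "length Q1' = 2 * k'"
    unfolding tamari_le_def dyck_path_iff_balanced by auto
  have P: "graft P1 P2 s = graft P1' P2' s'" and Q: "True # Q1 @ False # Q2 = True # Q1' @ False # Q2'"
    using eq unfolding d d' graft_interval_def by simp_all
  have "Q1 = Q1'" "Q2 = Q2'" using up_down_balanced_inj[OF Q P1(3) P1'(3)] by simp_all
  moreover from this have "k = k'" using P1(4) P1'(4) by simp
  moreover have "P1 = P1'" "P2 = P2'" "s = s'"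
    using graft_inj[OF P _ P1(1) I(2) P1'(1) I'(2)] P1(2) P1'(2) \<open>k = k'\<close> by simp_all
  ultimately show "d = d'" unfolding d d' by simp
qed

lemma bij_betw_graft_interval: "bij_betw graft_interval (graft_data n) (intervals (Suc n))"
proof (rule bij_betw_imageI)
  show "inj_on graft_interval (graft_data n)" by (rule inj_on_graft_interval)
  show "graft_interval ` graft_data n = intervals (Suc n)"
  proof (intro equalityI subsetI)
    fix I assume "I \<in> graft_interval ` graft_data n"
    then obtain k P1 Q1 P2 Q2 s where "((k, (P1, Q1), (P2, Q2)), s) \<in> graft_data n"
      and I: "I = (graft P1 P2 s, True # Q1 @ False # Q2)"
      unfolding graft_interval_def by auto
    then have "k \<le> n" and "tamari_le k P1 Q1" "tamari_le (n - k) P2 Q2" "s \<in> contacts P1"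
      by (simp_all add: mem_graft_data)
    with graft_tamari_le[of k P1 Q1 "n - k" P2 Q2 s] show "I \<in> intervals (Suc n)"
      unfolding I intervals_def by simp
  next
    fix I assume "I \<in> intervals (Suc n)"
    then obtain P Q where I: "I = (P, Q)" "tamari_le (Suc n) P Q" unfolding intervals_def by auto
    then obtain k P1 Q1 P2 Q2 s where "k \<le> n" "tamari_le k P1 Q1" "tamari_le (n - k) P2 Q2"
      "s \<in> contacts P1" "P = graft P1 P2 s" "Q = True # Q1 @ False # Q2"
      using tamari_le_Suc_decompose by metis
    then have "((k, (P1, Q1), (P2, Q2)), s) \<in> graft_data n" "I = graft_interval ((k, (P1, Q1), (P2, Q2)), s)"
      unfolding mem_graft_data graft_interval_def using I by simp_all
    then show "I \<in> graft_interval ` graft_data n" by blast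
  qed
qed

lemma sum_intervals_Suc:
  "(\<Sum>I\<in>intervals (Suc n). f (fst I)) =
   (\<Sum>k\<le>n. \<Sum>I1\<in>intervals k. \<Sum>I2\<in>intervals (n - k). \<Sum>s\<in>contacts (fst I1). f (graft (fst I1) (fst I2) s))"
proof -
  let ?g = "\<lambda>d. f (fst (graft_interval d))"
  let ?A = "SIGMA k:{..n}. intervals k \<times> intervals (n - k)"
  have data: "graft_data n = (SIGMA z:?A. contacts (fst (fst (snd z))))"
    unfolding graft_data_def by auto
  have "(\<Sum>I\<in>intervals (Suc n). f (fst I)) = sum ?g (graft_data n)"
    using sum.reindex_bij_betw[OF bij_betw_graft_interval, of "\<lambda>I. f (fst I)" n] by simp
  also have "\<dots> = (\<Sum>z\<in>?A. \<Sum>s\<in>contacts (fst (fst (snd z))). ?g (z, s))"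
    using sum.Sigma[of ?A "\<lambda>z. contacts (fst (fst (snd z)))" "\<lambda>z s. ?g (z, s)"] unfolding data by simp
  also have "\<dots> = (\<Sum>k\<le>n. \<Sum>I\<in>intervals k \<times> intervals (n - k). \<Sum>s\<in>contacts (fst (fst I)). ?g ((k, I), s))"
    using sum.Sigma[of "{..n}" "\<lambda>k. intervals k \<times> intervals (n - k)"
        "\<lambda>k I. \<Sum>s\<in>contacts (fst (fst I)). ?g ((k, I), s)"] by (simp add: split_beta)
  also have "\<dots> = (\<Sum>k\<le>n. \<Sum>I1\<in>intervals k. \<Sum>I2\<in>intervals (n - k). \<Sum>s\<in>contacts (fst I1). ?g ((k, I1, I2), s))"
    by (simp add: sum.cartesian_product')
  finally show ?thesis by (simp add: graft_interval_def split_beta)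
qed

definition path_gf :: "(bool list \<Rightarrow> real) \<Rightarrow> real fps" where
  "path_gf f = Abs_fps (\<lambda>n. \<Sum>I\<in>intervals n. f (fst I))"

lemma path_gf_nth: "fps_nth (path_gf f) n = (\<Sum>I\<in>intervals n. f (fst I))"
  by (simp add: path_gf_def)

lemma intervals_0: "intervals 0 = {([], [])}"
  unfolding intervals_def tamari_le_def dyck_path_def by auto

lemma path_gf_mult_nth:
  "fps_nth (path_gf a * path_gf b) n =
   (\<Sum>k\<le>n. \<Sum>I1\<in>intervals k. \<Sum>I2\<in>intervals (n - k). a (fst I1) * b (fst I2))"
  by (simp add: fps_mult_nth path_gf_nth atMost_atLeast0 sum_product)

lemma path_gf_graft:
  assumes "f [] = 0"
    and "\<And>P1 P2. balanced P1 \<Longrightarrow> balanced P2 \<Longrightarrow>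
      (\<Sum>s\<in>contacts P1. f (graft P1 P2 s)) = a P1 * b P2 + c P1 * d P2"
  shows "path_gf f = fps_X * (path_gf a * path_gf b + path_gf c * path_gf d)"
proof (rule fps_ext)
  fix n
  show "fps_nth (path_gf f) n = fps_nth (fps_X * (path_gf a * path_gf b + path_gf c * path_gf d)) n"
  proof (cases n)
    case 0
    then show ?thesis by (simp add: path_gf_nth intervals_0 assms(1))
  next
    case (Suc m)
    have "fps_nth (path_gf f) (Suc m) =
      (\<Sum>k\<le>m. \<Sum>I1\<in>intervals k. \<Sum>I2\<in>intervals (m - k). \<Sum>s\<in>contacts (fst I1). f (graft (fst I1) (fst I2) s))"
      by (simp add: path_gf_nth sum_intervals_Suc)
    also have "\<dots> = (\<Sum>k\<le>m. \<Sum>I1\<in>intervals k. \<Sum>I2\<in>intervals (m - k).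
        a (fst I1) * b (fst I2) + c (fst I1) * d (fst I2))"
      using assms(2) intervals_fst by (intro sum.cong refl) blast
    also have "\<dots> = fps_nth (path_gf a * path_gf b + path_gf c * path_gf d) m"
      by (simp add: path_gf_mult_nth sum.distrib)
    finally show ?thesis using Suc by (simp add: fps_X_mult_nth)
  qed
qed

lemma sum_atMost_Suc_Suc_split:
  fixes f :: "nat \<Rightarrow> 'a::comm_monoid_add"
  assumes "s \<le> L"
  shows "(\<Sum>i\<le>Suc (Suc (L + M)). f i) =
    f 0 + (\<Sum>p\<le>s. f (Suc p)) + (\<Sum>p\<in>{s..<L}. f (Suc (Suc p))) + (\<Sum>r\<le>M. f (Suc (Suc L) + r))"
proof -
  have "(\<Sum>i\<le>Suc (Suc (L + M)). f i) = f 0 + (\<Sum>i<Suc (Suc (L + M)). f (Suc i))"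
    by (simp only: lessThan_Suc_atMost sum.atMost_Suc_shift)
  also have "(\<Sum>i<Suc (Suc (L + M)). f (Suc i)) =
      (\<Sum>i<Suc s. f (Suc i)) + (\<Sum>i\<in>{Suc s..<Suc (Suc (L + M))}. f (Suc i))"
    using sum.atLeastLessThan_concat[of 0 "Suc s" "Suc (Suc (L + M))" "\<lambda>i. f (Suc i)"] assms
    unfolding atLeast0LessThan by simp
  also have "(\<Sum>i\<in>{Suc s..<Suc (Suc (L + M))}. f (Suc i)) =
      (\<Sum>i\<in>{Suc s..<Suc L}. f (Suc i)) + (\<Sum>i\<in>{Suc L..<Suc (Suc (L + M))}. f (Suc i))"
    using sum.atLeastLessThan_concat[of "Suc s" "Suc L" "Suc (Suc (L + M))" "\<lambda>i. f (Suc i)"] assms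
    by simp
  also have "(\<Sum>i\<in>{Suc s..<Suc L}. f (Suc i)) = (\<Sum>p\<in>{s..<L}. f (Suc (Suc p)))"
    by (simp only: sum.shift_bounds_Suc_ivl)
  also have "(\<Sum>i\<in>{Suc L..<Suc (Suc (L + M))}. f (Suc i)) = (\<Sum>r\<le>M. f (Suc (Suc L) + r))"
    using sum.shift_bounds_nat_ivl[of "\<lambda>i. f (Suc i)" 0 "Suc L" "Suc M"]
    by (simp add: atLeast0LessThan lessThan_Suc_atMost add.commute)
  finally show ?thesis by (simp add: lessThan_Suc_atMost add.assoc)
qed

definition pos_weight :: "real \<Rightarrow> real \<Rightarrow> real \<Rightarrow> bool list \<Rightarrow> nat \<Rightarrow> real" where
  "pos_weight w x y P i = w ^ nat (height P i) * x ^ contact_lt P i * y ^ contact_ge P i"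

definition path_weight :: "real \<Rightarrow> real \<Rightarrow> real \<Rightarrow> bool list \<Rightarrow> real" where
  "path_weight w x y P = (\<Sum>i\<le>length P. pos_weight w x y P i)"

definition contacts_between :: "bool list \<Rightarrow> nat \<Rightarrow> nat \<Rightarrow> nat" where
  "contacts_between P a b = card {j \<in> contacts P. a \<le> j \<and> j < b}"

lemma contacts_between_self [simp]: "contacts_between P a a = 0"
proof -
  have "{j \<in> contacts P. a \<le> j \<and> j < a} = {}" by auto
  then show ?thesis by (simp add: contacts_between_def)
qed

lemma contact_eq_card: "contact P = card (contacts P)"
  unfolding contact_def contacts_def ..

lemma contact_lt_eq: "contact_lt P i = card {j \<in> contacts P. j < i}"
  unfolding contact_lt_def contacts_def by (rule arg_cong[where f = card]) auto

lemma contact_ge_eq: "contact_ge P i = card {j \<in> contacts P. i \<le> j}"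
  unfolding contact_ge_def contacts_def by (rule arg_cong[where f = card]) auto

lemma length_in_contacts: "balanced P \<Longrightarrow> length P \<in> contacts P"
  by (simp add: contacts_def balanced_height_length)

lemma contact_ge_eq_Suc:
  assumes "balanced P" "s \<le> length P"
  shows "contact_ge P s = Suc (contacts_between P s (length P))"
proof -
  have "{j \<in> contacts P. s \<le> j} = insert (length P) {j \<in> contacts P. s \<le> j \<and> j < length P}"
    using assms length_in_contacts contacts_le_length by fastforce
  then show ?thesis unfolding contact_ge_eq contacts_between_def by simp
qed

lemma contact_eq_Suc: "balanced P \<Longrightarrow> contact P = Suc (contact_lt P (length P))"
  using contact_ge_eq_Suc[of P 0] by (simp add: contact_ge_eq contact_eq_card contact_lt_eq contacts_between_def)

lemma pos_weight_0: "pos_weight w x y P 0 = y ^ contact P"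
  by (simp add: pos_weight_def contact_lt_eq contact_ge_eq contact_eq_card)

context
  fixes P1 P2 :: "bool list" and s :: nat
  assumes P1: "balanced P1" and P2: "balanced P2" and s: "s \<in> contacts P1"
begin

lemma s_le_length: "s \<le> length P1"
  using s by (rule contacts_le_length)

lemma length_graft: "length (graft P1 P2 s) = Suc (Suc (length P1 + length P2))"
  using s_le_length by (simp add: graft_def)

lemma height_graft_prefix: "p \<le> s \<Longrightarrow> height (graft P1 P2 s) (Suc p) = 1 + height P1 p"
  unfolding graft_def using s_le_length by (simp add: height_append height_take)

lemma height_graft_suffix:
  assumes "s \<le> p" "p \<le> length P1"
  shows "height (graft P1 P2 s) (Suc (Suc p)) = height P1 p"
proof -
  have X: "balanced (take s P1)" using balanced_take_drop_contact(1)[OF P1 s] .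
  have "height (graft P1 P2 s) (Suc (Suc (length (take s P1))) + (p - s)) = height (drop s P1 @ P2) (p - s)"
    unfolding graft_def by (rule height_up_down_after[OF X])
  also have "\<dots> = height (drop s P1) (p - s)"
    using assms by (simp add: height_append)
  also have "\<dots> = height (take s P1 @ drop s P1) (length (take s P1) + (p - s))"
    using balanced_height_length[OF X] by (rule height_append_length[symmetric])
  finally show ?thesis using assms s_le_length by simp
qed

lemma height_graft_right: "height (graft P1 P2 s) (Suc (Suc (length P1)) + r) = height P2 r"
proof -
  have X: "balanced (take s P1)" and Y: "balanced (drop s P1)"
    using balanced_take_drop_contact[OF P1 s] by auto
  have "height (graft P1 P2 s) (Suc (Suc (length (take s P1))) + (length (drop s P1) + r)) =
      height (drop s P1 @ P2) (length (drop s P1) + r)"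
    unfolding graft_def by (rule height_up_down_after[OF X])
  also have "\<dots> = height P2 r"
    using balanced_height_length[OF Y] by (rule height_append_length)
  finally show ?thesis using s_le_length by (simp add: add.assoc)
qed

lemma contacts_graft:
  "contacts (graft P1 P2 s) = {0} \<union> (\<lambda>j. j + 2) ` {j \<in> contacts P1. s \<le> j \<and> j < length P1}
     \<union> (\<lambda>r. Suc (Suc (length P1)) + r) ` contacts P2"
proof (rule set_eqI)
  fix j
  let ?L = "length P1"
  have "j = 0 \<or> (\<exists>p. j = Suc p \<and> p \<le> s) \<or> (\<exists>p. j = Suc (Suc p) \<and> s \<le> p \<and> p < ?L)
      \<or> (\<exists>r. j = Suc (Suc ?L) + r)"
    using s_le_length by presburger
  then show "j \<in> contacts (graft P1 P2 s) \<longleftrightarrow> j \<in> {0} \<union> (\<lambda>j. j + 2) ` {j \<in> contacts P1. s \<le> j \<and> j < ?L}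
     \<union> (\<lambda>r. Suc (Suc ?L) + r) ` contacts P2"
  proof (elim disjE exE conjE)
    fix p assume "j = Suc p" "p \<le> s"
    then show ?thesis
      using height_graft_prefix[of p] balanced_height_nonneg[OF P1, of p] s_le_length
      by (auto simp: contacts_def)
  next
    fix p assume "j = Suc (Suc p)" "s \<le> p" "p < ?L"
    then show ?thesis
      using height_graft_suffix[of p] length_graft by (auto simp: contacts_def)
  next
    fix r assume "j = Suc (Suc ?L) + r"
    then show ?thesis
      using height_graft_right[of r] length_graft by (auto simp: contacts_def)
  qed (simp add: contacts_def)
qed

lemma card_contacts_graft:
  "card {j \<in> contacts (graft P1 P2 s). Q j} =
   (if Q 0 then 1 else 0) + card {j \<in> contacts P1. s \<le> j \<and> j < length P1 \<and> Q (j + 2)}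
   + card {r \<in> contacts P2. Q (Suc (Suc (length P1)) + r)}"
proof -
  let ?L = "length P1"
  define A where "A = (if Q 0 then {0::nat} else {})"
  define B where "B = (\<lambda>j. j + 2) ` {j \<in> contacts P1. s \<le> j \<and> j < ?L \<and> Q (j + 2)}"
  define C where "C = (\<lambda>r. Suc (Suc ?L) + r) ` {r \<in> contacts P2. Q (Suc (Suc ?L) + r)}"
  have "{j \<in> contacts (graft P1 P2 s). Q j} = A \<union> B \<union> C"
    unfolding contacts_graft A_def B_def C_def by auto
  moreover have "card (A \<union> B \<union> C) = card A + card B + card C"
  proof -
    have "finite A" "finite B" "finite C" by (simp_all add: A_def B_def C_def)
    moreover have "A \<inter> B = {}" "(A \<union> B) \<inter> C = {}" by (auto simp: A_def B_def C_def)
    ultimately show ?thesis by (simp add: card_Un_disjoint)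
  qed
  moreover have "card B = card {j \<in> contacts P1. s \<le> j \<and> j < ?L \<and> Q (j + 2)}"
    unfolding B_def by (rule card_image) (auto simp: inj_on_def)
  moreover have "card C = card {r \<in> contacts P2. Q (Suc (Suc ?L) + r)}"
    unfolding C_def by (rule card_image) (auto simp: inj_on_def)
  ultimately show ?thesis by (simp add: A_def)
qed

lemma pos_weight_graft_prefix:
  assumes p: "p \<le> s"
  shows "pos_weight w x y (graft P1 P2 s) (Suc p) =
    w ^ Suc (nat (height P1 p)) * x * y ^ (contacts_between P1 s (length P1) + contact P2)"
proof -
  have "nat (height (graft P1 P2 s) (Suc p)) = Suc (nat (height P1 p))"
    using height_graft_prefix[OF p] balanced_height_nonneg[OF P1, of p] by simp
  moreover have "{j \<in> contacts P1. s \<le> j \<and> j < length P1 \<and> j + 2 < Suc p} = {}"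
    and "{r \<in> contacts P2. Suc (Suc (length P1)) + r < Suc p} = {}"
    using p s_le_length by auto
  then have "contact_lt (graft P1 P2 s) (Suc p) = 1"
    unfolding contact_lt_eq card_contacts_graft by simp
  moreover have "{j \<in> contacts P1. s \<le> j \<and> j < length P1 \<and> Suc p \<le> j + 2} =
      {j \<in> contacts P1. s \<le> j \<and> j < length P1}"
    and "{r \<in> contacts P2. Suc p \<le> Suc (Suc (length P1)) + r} = contacts P2"
    using p s_le_length by auto
  then have "contact_ge (graft P1 P2 s) (Suc p) = contacts_between P1 s (length P1) + contact P2"
    unfolding contact_ge_eq card_contacts_graft contacts_between_def contact_eq_card by simp
  ultimately show ?thesis by (simp add: pos_weight_def)
qed

lemma pos_weight_graft_suffix:
  assumes p: "s \<le> p" "p < length P1"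
  shows "pos_weight w x y (graft P1 P2 s) (Suc (Suc p)) =
    w ^ nat (height P1 p) * x ^ Suc (contacts_between P1 s p)
      * y ^ (contacts_between P1 p (length P1) + contact P2)"
proof -
  have "{j \<in> contacts P1. s \<le> j \<and> j < length P1 \<and> j + 2 < Suc (Suc p)} = {j \<in> contacts P1. s \<le> j \<and> j < p}"
    and "{r \<in> contacts P2. Suc (Suc (length P1)) + r < Suc (Suc p)} = {}"
    using p by auto
  then have "contact_lt (graft P1 P2 s) (Suc (Suc p)) = Suc (contacts_between P1 s p)"
    unfolding contact_lt_eq card_contacts_graft contacts_between_def by simp
  moreover have "{j \<in> contacts P1. s \<le> j \<and> j < length P1 \<and> Suc (Suc p) \<le> j + 2} =
      {j \<in> contacts P1. p \<le> j \<and> j < length P1}"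
    and "{r \<in> contacts P2. Suc (Suc p) \<le> Suc (Suc (length P1)) + r} = contacts P2"
    using p by auto
  then have "contact_ge (graft P1 P2 s) (Suc (Suc p)) = contacts_between P1 p (length P1) + contact P2"
    unfolding contact_ge_eq card_contacts_graft contacts_between_def contact_eq_card by simp
  ultimately show ?thesis
    using height_graft_suffix[of p] p by (simp add: pos_weight_def)
qed

lemma pos_weight_graft_right:
  "pos_weight w x y (graft P1 P2 s) (Suc (Suc (length P1)) + r) =
   x ^ Suc (contacts_between P1 s (length P1)) * pos_weight w x y P2 r"
proof -
  have "{j \<in> contacts P1. s \<le> j \<and> j < length P1 \<and> j + 2 < Suc (Suc (length P1)) + r} =
      {j \<in> contacts P1. s \<le> j \<and> j < length P1}"
    and "{r' \<in> contacts P2. Suc (Suc (length P1)) + r' < Suc (Suc (length P1)) + r} =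
      {j \<in> contacts P2. j < r}"
    by auto
  then have "contact_lt (graft P1 P2 s) (Suc (Suc (length P1)) + r) =
      Suc (contacts_between P1 s (length P1)) + contact_lt P2 r"
    unfolding contact_lt_eq card_contacts_graft contacts_between_def by simp
  moreover have "{j \<in> contacts P1. s \<le> j \<and> j < length P1 \<and> Suc (Suc (length P1)) + r \<le> j + 2} = {}"
    and "{r' \<in> contacts P2. Suc (Suc (length P1)) + r \<le> Suc (Suc (length P1)) + r'} =
      {j \<in> contacts P2. r \<le> j}"
    by auto
  then have "contact_ge (graft P1 P2 s) (Suc (Suc (length P1)) + r) = contact_ge P2 r"
    unfolding contact_ge_eq card_contacts_graft by simp
  ultimately show ?thesis
    using height_graft_right[of r] by (simp add: pos_weight_def power_add)
qed

lemma path_weight_graft: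
  "path_weight w x y (graft P1 P2 s) = y ^ contact (graft P1 P2 s)
   + (\<Sum>p\<le>s. pos_weight w x y (graft P1 P2 s) (Suc p))
   + (\<Sum>p\<in>{s..<length P1}. pos_weight w x y (graft P1 P2 s) (Suc (Suc p)))
   + (\<Sum>r\<le>length P2. pos_weight w x y (graft P1 P2 s) (Suc (Suc (length P1)) + r))"
  unfolding path_weight_def length_graft sum_atMost_Suc_Suc_split[OF s_le_length] pos_weight_0 ..

end

lemma sum_rank:
  fixes S :: "nat set" and f :: "nat \<Rightarrow> 'a::comm_monoid_add"
  assumes S: "finite S"
  shows "(\<Sum>s\<in>S. f (card {t \<in> S. s \<le> t})) = (\<Sum>k<card S. f (Suc k))"
proof -
  let ?rank = "\<lambda>s. card {t \<in> S. s \<le> t}"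
  have less: "?rank s' < ?rank s" if "s \<in> S" "s < s'" for s s'
  proof (rule psubset_card_mono)
    have "s \<in> {t \<in> S. s \<le> t}" and "s \<notin> {t \<in> S. s' \<le> t}" using that by auto
    moreover have "{t \<in> S. s' \<le> t} \<subseteq> {t \<in> S. s \<le> t}" using that by auto
    ultimately show "{t \<in> S. s' \<le> t} \<subset> {t \<in> S. s \<le> t}" by blast
  qed (use S in simp)
  then have inj: "inj_on ?rank S"
    by (intro inj_onI) (metis linorder_neqE_nat less_irrefl)
  have "?rank ` S \<subseteq> {1..card S}"
    using S by (auto simp: card_gt_0_iff Suc_le_eq intro: card_mono)
  moreover have "card (?rank ` S) = card {1..card S}"
    using card_image[OF inj] by simp
  ultimately have "?rank ` S = {1..card S}"
    by (intro card_subset_eq) auto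
  then have "(\<Sum>s\<in>S. f (?rank s)) = (\<Sum>k\<in>{1..card S}. f k)"
    using sum.reindex[OF inj, of f] by simp
  also have "\<dots> = (\<Sum>k<card S. f (Suc k))"
    by (simp add: sum.atLeast1_atMost_eq)
  finally show ?thesis .
qed

lemma sum_contacts_from:
  fixes y :: "'a::comm_semiring_1"
  assumes P: "balanced P"
  shows "(\<Sum>s\<in>{s \<in> contacts P. p \<le> s}. y ^ contacts_between P s (length P)) = (\<Sum>k<contact_ge P p. y ^ k)"
proof -
  let ?S = "{s \<in> contacts P. p \<le> s}"
  have "card {t \<in> ?S. s \<le> t} = Suc (contacts_between P s (length P))" if "s \<in> ?S" for s
  proof -
    have "{t \<in> ?S. s \<le> t} = {t \<in> contacts P. s \<le> t}" using that by auto
    then show ?thesis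
      using contact_ge_eq_Suc[OF P contacts_le_length] that by (simp add: contact_ge_eq)
  qed
  then have "(\<Sum>s\<in>?S. y ^ contacts_between P s (length P)) = (\<Sum>s\<in>?S. (\<lambda>k. y ^ (k - 1)) (card {t \<in> ?S. s \<le> t}))"
    by simp
  also have "\<dots> = (\<Sum>k<card ?S. (\<lambda>k. y ^ (k - 1)) (Suc k))"
    by (rule sum_rank) simp
  also have "\<dots> = (\<Sum>k<contact_ge P p. y ^ k)"
    by (simp add: contact_ge_eq)
  finally show ?thesis .
qed

lemma sum_contacts_before:
  fixes x :: "'a::comm_semiring_1"
  shows "(\<Sum>s\<in>{s \<in> contacts P. s < p}. x ^ contacts_between P s p) = x * (\<Sum>k<contact_lt P p. x ^ k)"
proof -
  let ?S = "{s \<in> contacts P. s < p}"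
  have "card {t \<in> ?S. s \<le> t} = contacts_between P s p" if "s \<in> ?S" for s
    unfolding contacts_between_def by (rule arg_cong[where f = card]) auto
  then have "(\<Sum>s\<in>?S. x ^ contacts_between P s p) = (\<Sum>s\<in>?S. (\<lambda>k. x ^ k) (card {t \<in> ?S. s \<le> t}))"
    by simp
  also have "\<dots> = (\<Sum>k<card ?S. (\<lambda>k. x ^ k) (Suc k))"
    by (rule sum_rank) simp
  also have "\<dots> = x * (\<Sum>k<contact_lt P p. x ^ k)"
    by (simp add: contact_lt_eq sum_distrib_left[symmetric])
  finally show ?thesis .
qed

(* Summing over all contacts s of P1 the weights of the vertices of graft P1 P2 s that come from
   P1 produces lifted_weight (vertices before the inserted down-step, raised by one) and
   unlifted_weight (vertices after it). *)
definition lifted_weight :: "real \<Rightarrow> real \<Rightarrow> bool list \<Rightarrow> real" where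
  "lifted_weight w y P = (\<Sum>p\<le>length P. w ^ nat (height P p) * (\<Sum>k<contact_ge P p. y ^ k))"

definition unlifted_weight :: "real \<Rightarrow> real \<Rightarrow> real \<Rightarrow> bool list \<Rightarrow> real" where
  "unlifted_weight w x y P = (\<Sum>p<length P.
     w ^ nat (height P p) * y ^ contacts_between P p (length P) * (\<Sum>k<contact_lt P p. x ^ k))"

lemma sum_graft_prefix:
  assumes P1: "balanced P1" and P2: "balanced P2"
  shows "(\<Sum>s\<in>contacts P1. \<Sum>p\<le>s. pos_weight w x y (graft P1 P2 s) (Suc p)) =
    x * w * y ^ contact P2 * lifted_weight w y P1"
proof -
  let ?S = "contacts P1" and ?L = "length P1"
  define F where "F p s = x * w * y ^ contact P2 * w ^ nat (height P1 p) * y ^ contacts_between P1 s ?L" for p s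
  have "(\<Sum>s\<in>?S. \<Sum>p\<le>s. pos_weight w x y (graft P1 P2 s) (Suc p)) = (\<Sum>s\<in>?S. \<Sum>p\<in>{p \<in> {..?L}. p \<le> s}. F p s)"
  proof (rule sum.cong[OF refl])
    fix s assume s: "s \<in> ?S"
    then have "{..s} = {p \<in> {..?L}. p \<le> s}" using contacts_le_length by fastforce
    then show "(\<Sum>p\<le>s. pos_weight w x y (graft P1 P2 s) (Suc p)) = (\<Sum>p\<in>{p \<in> {..?L}. p \<le> s}. F p s)"
      using pos_weight_graft_prefix[OF P1 P2 s] by (simp add: F_def power_add mult_ac)
  qed
  also have "\<dots> = (\<Sum>p\<le>?L. \<Sum>s\<in>{s \<in> ?S. p \<le> s}. F p s)"
    by (rule sum.swap_restrict) auto
  also have "\<dots> = (\<Sum>p\<le>?L. x * w * y ^ contact P2 * (w ^ nat (height P1 p) * (\<Sum>k<contact_ge P1 p. y ^ k)))"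
    unfolding F_def by (simp add: sum_distrib_left[symmetric] sum_contacts_from[OF P1] mult_ac)
  finally show ?thesis by (simp add: lifted_weight_def sum_distrib_left)
qed

lemma sum_graft_suffix_at:
  assumes P1: "balanced P1" and P2: "balanced P2" and p: "p < length P1"
  shows "(\<Sum>s\<in>{s \<in> contacts P1. s \<le> p}. pos_weight w x y (graft P1 P2 s) (Suc (Suc p))) =
    (if p \<in> contacts P1 then x * y ^ contact P2 * y ^ contacts_between P1 p (length P1) else 0)
    + x\<^sup>2 * y ^ contact P2 * (w ^ nat (height P1 p) * y ^ contacts_between P1 p (length P1)
        * (\<Sum>k<contact_lt P1 p. x ^ k))"
proof -
  let ?S = "contacts P1" and ?c = "contacts_between P1 p (length P1)"
  define F where "F s = w ^ nat (height P1 p) * x ^ Suc (contacts_between P1 s p) * y ^ (?c + contact P2)" for s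
  have "(\<Sum>s\<in>{s \<in> ?S. s < p}. F s) =
      (\<Sum>s\<in>{s \<in> ?S. s < p}. (w ^ nat (height P1 p) * x * y ^ (?c + contact P2)) * x ^ contacts_between P1 s p)"
    by (simp add: F_def mult_ac)
  also have "\<dots> = w ^ nat (height P1 p) * x * y ^ (?c + contact P2) * (\<Sum>s\<in>{s \<in> ?S. s < p}. x ^ contacts_between P1 s p)"
    by (rule sum_distrib_left[symmetric])
  finally have before: "(\<Sum>s\<in>{s \<in> ?S. s < p}. F s) =
      x\<^sup>2 * y ^ contact P2 * (w ^ nat (height P1 p) * y ^ ?c * (\<Sum>k<contact_lt P1 p. x ^ k))"
    by (simp add: sum_contacts_before power_add power2_eq_square mult_ac)
  have at_p: "F p = x * y ^ contact P2 * y ^ ?c" if "p \<in> ?S"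
    using that by (simp add: F_def contacts_def power_add mult_ac)
  have split: "(\<Sum>s\<in>{s \<in> ?S. s \<le> p}. F s) = (\<Sum>s\<in>{s \<in> ?S. s < p}. F s) + (if p \<in> ?S then F p else 0)"
  proof -
    have "{s \<in> ?S. s \<le> p} = {s \<in> ?S. s < p} \<union> (if p \<in> ?S then {p} else {})"
      by (auto simp: le_less)
    then show ?thesis by (simp add: sum.union_disjoint)
  qed
  have "(\<Sum>s\<in>{s \<in> ?S. s \<le> p}. pos_weight w x y (graft P1 P2 s) (Suc (Suc p))) = (\<Sum>s\<in>{s \<in> ?S. s \<le> p}. F s)"
    using pos_weight_graft_suffix[OF P1 P2 _ _ p] by (intro sum.cong) (auto simp: F_def)
  then show ?thesis
    unfolding split using before at_p by (cases "p \<in> ?S") simp_all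
qed

lemma sum_graft_suffix:
  assumes P1: "balanced P1" and P2: "balanced P2"
  shows "(\<Sum>s\<in>contacts P1. \<Sum>p\<in>{s..<length P1}. pos_weight w x y (graft P1 P2 s) (Suc (Suc p))) =
    x * y ^ contact P2 * (y * (\<Sum>k<contact P1 - 1. y ^ k)) + x\<^sup>2 * y ^ contact P2 * unlifted_weight w x y P1"
proof -
  let ?S = "contacts P1" and ?L = "length P1"
  have "(\<Sum>s\<in>?S. \<Sum>p\<in>{s..<?L}. pos_weight w x y (graft P1 P2 s) (Suc (Suc p))) =
      (\<Sum>s\<in>?S. \<Sum>p\<in>{p \<in> {..<?L}. s \<le> p}. pos_weight w x y (graft P1 P2 s) (Suc (Suc p)))"
    by (intro sum.cong) auto
  also have "\<dots> = (\<Sum>p<?L. \<Sum>s\<in>{s \<in> ?S. s \<le> p}. pos_weight w x y (graft P1 P2 s) (Suc (Suc p)))"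
    by (rule sum.swap_restrict) auto
  also have "\<dots> = (\<Sum>p<?L. if p \<in> ?S then x * y ^ contact P2 * y ^ contacts_between P1 p ?L else 0)
      + x\<^sup>2 * y ^ contact P2 * unlifted_weight w x y P1"
    by (simp add: sum_graft_suffix_at[OF P1 P2] sum.distrib unlifted_weight_def sum_distrib_left)
  also have "(\<Sum>p<?L. if p \<in> ?S then x * y ^ contact P2 * y ^ contacts_between P1 p ?L else 0) =
      x * y ^ contact P2 * (\<Sum>p\<in>{p \<in> ?S. p < ?L}. y ^ contacts_between P1 p ?L)"
    by (simp add: sum.inter_filter[symmetric] sum_distrib_left conj_commute)
  also have "(\<Sum>p\<in>{p \<in> ?S. p < ?L}. y ^ contacts_between P1 p ?L) = y * (\<Sum>k<contact P1 - 1. y ^ k)"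
    using contact_eq_Suc[OF P1] by (simp add: sum_contacts_before)
  finally show ?thesis .
qed

lemma sum_graft_right:
  assumes P1: "balanced P1" and P2: "balanced P2"
  shows "(\<Sum>s\<in>contacts P1. \<Sum>r\<le>length P2. pos_weight w x y (graft P1 P2 s) (Suc (Suc (length P1)) + r)) =
    x * (\<Sum>k<contact P1. x ^ k) * path_weight w x y P2"
proof -
  have "(\<Sum>s\<in>contacts P1. \<Sum>r\<le>length P2. pos_weight w x y (graft P1 P2 s) (Suc (Suc (length P1)) + r)) =
      (\<Sum>s\<in>contacts P1. x * x ^ contacts_between P1 s (length P1) * path_weight w x y P2)"
  proof (rule sum.cong[OF refl])
    fix s assume s: "s \<in> contacts P1"
    show "(\<Sum>r\<le>length P2. pos_weight w x y (graft P1 P2 s) (Suc (Suc (length P1)) + r)) =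
        x * x ^ contacts_between P1 s (length P1) * path_weight w x y P2"
      unfolding pos_weight_graft_right[OF P1 P2 s] path_weight_def sum_distrib_left by simp
  qed
  also have "\<dots> = x * (\<Sum>s\<in>{s \<in> contacts P1. 0 \<le> s}. x ^ contacts_between P1 s (length P1)) * path_weight w x y P2"
    by (simp add: sum_distrib_left sum_distrib_right mult_ac)
  also have "\<dots> = x * (\<Sum>k<contact P1. x ^ k) * path_weight w x y P2"
    unfolding sum_contacts_from[OF P1] by (simp add: contact_ge_eq contact_eq_card)
  finally show ?thesis .
qed

lemma path_weight_1_diff:
  "path_weight w 1 y P - path_weight w 1 1 P = (y - 1) * lifted_weight w y P"
proof -
  have "path_weight w 1 y P - path_weight w 1 1 P =
      (\<Sum>p\<le>length P. w ^ nat (height P p) * (y ^ contact_ge P p - 1))"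
    by (simp add: path_weight_def pos_weight_def sum_subtractf[symmetric] algebra_simps)
  also have "\<dots> = (y - 1) * lifted_weight w y P"
    by (simp add: lifted_weight_def sum_distrib_left power_diff_1_eq mult_ac)
  finally show ?thesis .
qed

lemma path_weight_x_diff:
  assumes P: "balanced P" and x: "x \<noteq> 0"
  shows "path_weight w x y P - y / x * x ^ contact P - path_weight w 1 y P + y =
    (x - 1) * y * unlifted_weight w x y P"
proof -
  let ?L = "length P" and ?c = "contact P"
  define g where "g p = w ^ nat (height P p) * y ^ contact_ge P p * (x ^ contact_lt P p - 1)" for p
  have "path_weight w x y P - path_weight w 1 y P = (\<Sum>p\<le>?L. g p)"
    by (simp add: path_weight_def pos_weight_def g_def sum_subtractf[symmetric] algebra_simps)
  also have "\<dots> = g ?L + (\<Sum>p<?L. g p)"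
    by (simp add: lessThan_Suc_atMost[symmetric])
  also have "g ?L = y * x ^ (?c - 1) - y"
    using contact_ge_eq_Suc[OF P, of ?L] contact_eq_Suc[OF P] balanced_height_length[OF P]
    by (simp add: g_def algebra_simps)
  also have "(\<Sum>p<?L. g p) = (x - 1) * y * unlifted_weight w x y P"
  proof -
    define T where "T p = w ^ nat (height P p) * y ^ contacts_between P p ?L * (\<Sum>k<contact_lt P p. x ^ k)" for p
    have "g p = (x - 1) * y * T p" if "p < ?L" for p
      using contact_ge_eq_Suc[OF P, of p] that by (simp add: g_def T_def power_diff_1_eq mult_ac)
    then have "(\<Sum>p<?L. g p) = (\<Sum>p<?L. (x - 1) * y * T p)" by simp
    also have "\<dots> = (x - 1) * y * (\<Sum>p<?L. T p)" by (rule sum_distrib_left[symmetric])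
    finally show ?thesis by (simp add: unlifted_weight_def T_def)
  qed
  finally show ?thesis
    using contact_eq_Suc[OF P] x by (simp add: power_eq_if algebra_simps)
qed

lemma sum_graft_path_weight:
  fixes w x y :: real
  assumes P1: "balanced P1" and P2: "balanced P2"
    and x: "x \<noteq> 0" "x \<noteq> 1" and y: "y \<noteq> 0" "y \<noteq> 1"
  shows "(\<Sum>s\<in>contacts P1. path_weight w x y (graft P1 P2 s) - y ^ contact (graft P1 P2 s)) =
    (x * w / (y - 1) * (path_weight w 1 y P1 - path_weight w 1 1 P1)
     + x / (y - 1) * (y ^ contact P1 - y)
     + x\<^sup>2 / (y * (x - 1)) * (path_weight w x y P1 - y / x * x ^ contact P1 - path_weight w 1 y P1 + y))
      * y ^ contact P2
    + x / (x - 1) * (x ^ contact P1 - 1) * path_weight w x y P2"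
proof -
  have "(\<Sum>s\<in>contacts P1. path_weight w x y (graft P1 P2 s) - y ^ contact (graft P1 P2 s)) =
      (\<Sum>s\<in>contacts P1. \<Sum>p\<le>s. pos_weight w x y (graft P1 P2 s) (Suc p))
      + (\<Sum>s\<in>contacts P1. \<Sum>p\<in>{s..<length P1}. pos_weight w x y (graft P1 P2 s) (Suc (Suc p)))
      + (\<Sum>s\<in>contacts P1. \<Sum>r\<le>length P2. pos_weight w x y (graft P1 P2 s) (Suc (Suc (length P1)) + r))"
    by (simp add: path_weight_graft[OF P1 P2] sum.distrib)
  also have "\<dots> = x * w * lifted_weight w y P1 * y ^ contact P2
      + x * (y * (\<Sum>k<contact P1 - 1. y ^ k)) * y ^ contact P2 + x\<^sup>2 * unlifted_weight w x y P1 * y ^ contact P2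
      + x * (\<Sum>k<contact P1. x ^ k) * path_weight w x y P2"
    unfolding sum_graft_prefix[OF P1 P2] sum_graft_suffix[OF P1 P2] sum_graft_right[OF P1 P2]
    by (simp add: algebra_simps)
  also have "x * w * lifted_weight w y P1 = x * w / (y - 1) * (path_weight w 1 y P1 - path_weight w 1 1 P1)"
    using y by (simp add: path_weight_1_diff)
  also have "x * (y * (\<Sum>k<contact P1 - 1. y ^ k)) = x / (y - 1) * (y ^ contact P1 - y)"
  proof -
    obtain m where m: "contact P1 = Suc m" using contact_eq_Suc[OF P1] by blast
    have "y ^ contact P1 - y = y * (y ^ m - 1)" unfolding m by (simp add: algebra_simps)
    then show ?thesis using y by (simp add: m power_diff_1_eq)
  qed
  also have "x\<^sup>2 * unlifted_weight w x y P1 =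
      x\<^sup>2 / (y * (x - 1)) * (path_weight w x y P1 - y / x * x ^ contact P1 - path_weight w 1 y P1 + y)"
    unfolding path_weight_x_diff[OF P1 x(1)] using x y by simp
  also have "x * (\<Sum>k<contact P1. x ^ k) = x / (x - 1) * (x ^ contact P1 - 1)"
    using x by (simp add: power_diff_1_eq)
  finally show ?thesis by (simp add: algebra_simps)
qed

lemma path_gf_diff: "path_gf (\<lambda>P. f P - g P) = path_gf f - path_gf g"
  by (rule fps_ext) (simp add: path_gf_nth sum_subtractf)

lemma path_gf_add: "path_gf (\<lambda>P. f P + g P) = path_gf f + path_gf g"
  by (rule fps_ext) (simp add: path_gf_nth sum.distrib)

lemma path_gf_cmult: "path_gf (\<lambda>P. c * f P) = fps_const c * path_gf f"
  by (rule fps_ext) (simp add: path_gf_nth sum_distrib_left)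

lemma F_gf_eq_path_gf: "F_gf x = path_gf (\<lambda>P. x ^ contact P)"
  by (simp add: F_gf_def path_gf_def split_beta)

lemma path_gf_const: "path_gf (\<lambda>P. c) = fps_const c * F_gf 1"
  using path_gf_cmult[of c "\<lambda>P. 1"] by (simp add: F_gf_eq_path_gf)

lemma G_gf_eq_path_gf: "G_gf w x y = path_gf (path_weight w x y)"
  unfolding G_gf_def path_gf_def
proof (intro arg_cong[where f = Abs_fps] ext sum.cong refl)
  fix n I assume "I \<in> intervals n"
  then have "length (fst I) = 2 * n" using intervals_fst by blast
  then show "(case I of (P, Q) \<Rightarrow> \<Sum>i = 0..2 * n. w ^ nat (height P i) * x ^ contact_lt P i * y ^ contact_ge P i)
      = path_weight w x y (fst I)"
    by (simp add: split_beta path_weight_def pos_weight_def atLeast0AtMost)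
qed

theorem proposition3p1:
  fixes w x y :: real
  assumes "x \<noteq> 0" "x \<noteq> 1" "y \<noteq> 0" "y \<noteq> 1"
  shows "G_gf w x y =
      F_gf y
    + fps_X * fps_const (x * w / (y - 1)) * (G_gf w 1 y - G_gf w 1 1) * F_gf y
    + fps_X * fps_const (x / (y - 1)) * (F_gf y - fps_const y * F_gf 1) * F_gf y
    + fps_X * fps_const (x ^ 2 / (y * (x - 1)))
        * (G_gf w x y - fps_const (y / x) * F_gf x - G_gf w 1 y + fps_const y * F_gf 1) * F_gf y
    + fps_X * fps_const (x / (x - 1)) * (F_gf x - F_gf 1) * G_gf w x y"
proof -
  define a where "a P = x * w / (y - 1) * (path_weight w 1 y P - path_weight w 1 1 P)
    + x / (y - 1) * (y ^ contact P - y)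
    + x\<^sup>2 / (y * (x - 1)) * (path_weight w x y P - y / x * x ^ contact P - path_weight w 1 y P + y)" for P
  define c where "c P = x / (x - 1) * (x ^ contact P - 1)" for P
  have "G_gf w x y - F_gf y = path_gf (\<lambda>P. path_weight w x y P - y ^ contact P)"
    by (simp add: path_gf_diff F_gf_eq_path_gf G_gf_eq_path_gf)
  also have "\<dots> = fps_X * (path_gf a * path_gf (\<lambda>P. y ^ contact P) + path_gf c * path_gf (path_weight w x y))"
    by (rule path_gf_graft)
      (simp add: path_weight_def pos_weight_0, simp add: a_def c_def sum_graft_path_weight assms)
  also have "path_gf a = fps_const (x * w / (y - 1)) * (G_gf w 1 y - G_gf w 1 1)
      + fps_const (x / (y - 1)) * (F_gf y - fps_const y * F_gf 1)
      + fps_const (x\<^sup>2 / (y * (x - 1))) * (G_gf w x y - fps_const (y / x) * F_gf x - G_gf w 1 y + fps_const y * F_gf 1)"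
    unfolding a_def
    by (simp only: path_gf_add path_gf_diff path_gf_cmult path_gf_const
        F_gf_eq_path_gf[symmetric] G_gf_eq_path_gf[symmetric])
  also have "path_gf c = fps_const (x / (x - 1)) * (F_gf x - F_gf 1)"
    unfolding c_def
    by (simp only: path_gf_diff path_gf_cmult path_gf_const F_gf_eq_path_gf[symmetric]
        fps_const_1_eq_1 mult_1_left)
  finally show ?thesis
    by (simp add: F_gf_eq_path_gf[symmetric] G_gf_eq_path_gf[symmetric] eq_diff_eq algebra_simps)
qed

end
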